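(* Let $\mathcal{M}\subseteq\mathbb{S}^n$ be a finite union of compact sets, $\mathcal{M}=\bigcup_{i=1}^k\mathcal{M}_i$. Suppose that for all nonzero $X\in\mathbb{S}^n_+$ and all $i\in\{1,\dots,k\}$, if $\langle M_i,X\rangle=0$ for some $M_i\in\mathcal{M}_i$, then $\langle M,X\rangle>0$ for all $M\in\mathcal{M}\setminus\mathcal{M}_i$. Then $\mathcal{S}(\mathcal{M})$ is rank-one generated if and only if $\mathcal{S}(\mathcal{M}_i)$ is rank-one generated for all $i\in\{1,\dots,k\}$.
   Context: $\mathbb{S}^n$ denotes real symmetric $n\times n$ matrices with $\langle A,B\rangle=\mathrm{tr}(AB)$, $\mathbb{S}^n_+$ the PSD cone. For $\mathcal{M}\subseteq\mathbb{S}^n$, $\mathcal{S}(\mathcal{M})=\{X\in\mathbb{S}^n_+:\langle M,X\rangle\ge0\ \forall M\in\mathcal{M}\}$. A closed convex cone $\mathcal{S}\subseteq\mathbb{S}^n_+$ is rank-one generated (ROG) if $\mathcal{S}=\mathrm{conv}(\mathcal{S}\cap\{xx^\top:x\in\mathbb{R}^n\})$. *)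

theory Defs
  imports "HOL-Analysis.Analysis"
begin

definition sym_mat :: "real^'n^'n \<Rightarrow> bool" where
  "sym_mat A \<longleftrightarrow> transpose A = A"

definition symmats :: "(real^'n^'n) set" where
  "symmats = {A. sym_mat A}"

definition mtrace :: "real^'n^'n \<Rightarrow> real" where
  "mtrace A = (\<Sum>i\<in>UNIV. A $ i $ i)"

definition frob :: "real^'n^'n \<Rightarrow> real^'n^'n \<Rightarrow> real" where
  "frob A B = mtrace (A ** B)"

definition psd_cone :: "(real^'n^'n) set" where
  "psd_cone = {X. sym_mat X \<and> (\<forall>x. x \<bullet> (X *v x) \<ge> 0)}"

definition SM :: "(real^'n^'n) set \<Rightarrow> (real^'n^'n) set" where
  "SM \<M> = {X \<in> psd_cone. \<forall>M\<in>\<M>. frob M X \<ge> 0}"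

definition outer :: "real^'n \<Rightarrow> real^'n^'n" where
  "outer x = (\<chi> i j. x $ i * x $ j)"

definition ROG :: "(real^'n^'n) set \<Rightarrow> bool" where
  "ROG S \<longleftrightarrow> S = convex hull (S \<inter> range outer)"

end

theory Submission
  imports Defs
begin

text \<open>
  A closed convex cone K of positive semidefinite matrices is rank-one generated iff every extreme
  point of its compact slice {X \<in> K. tr X = 1} has rank one (Krein-Milman). Let X be such an
  extreme point, for S(M_i) or for S(M). If some M \<in> M_i satisfies <M,X> = 0, the separation
  hypothesis puts the whole face {Y : <M,Y> = 0} of the slice of S(M_i) inside S(M), so X is
  extreme in the one slice iff it is extreme in the other. Otherwise every constraint of the compact
  family is strict at X, hence strict near X, so X is already extreme in the slice of the PSD cone;
  that slice is the convex hull of the trace-one matrices x x^T.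
\<close>

section \<open>Cones, slices and extreme points\<close>

lemma conic_convex_hull:
  assumes "conic S"
  shows "conic (convex hull S)"
  unfolding conic_def
proof (intro allI impI)
  fix x and c :: real
  assume "x \<in> convex hull S" "0 \<le> c"
  then have "c *\<^sub>R x \<in> convex hull ((\<lambda>x. c *\<^sub>R x) ` S)"
    unfolding convex_hull_scaling by blast
  also have "\<dots> \<subseteq> convex hull S"
    using assms \<open>0 \<le> c\<close> by (intro hull_mono) (auto simp: conic_def)
  finally show "c *\<^sub>R x \<in> convex hull S" .
qed

lemma convex_hull_Int_hyperplane_conic:
  fixes T :: "'a::real_inner set"
  assumes "conic T" and pos: "\<And>x. x \<in> T \<Longrightarrow> x \<noteq> 0 \<Longrightarrow> 0 < w \<bullet> x"
  shows "convex hull T \<inter> {x. w \<bullet> x = 1} = convex hull (T \<inter> {x. w \<bullet> x = 1})"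
proof
  let ?H = "{x. w \<bullet> x = 1}"
  have slice_in_H: "convex hull (T \<inter> ?H) \<subseteq> ?H"
    by (simp add: hull_minimal convex_hyperplane)
  then show "convex hull (T \<inter> ?H) \<subseteq> convex hull T \<inter> ?H"
    by (simp add: hull_mono)
  have "T \<subseteq> convex_cone hull (T \<inter> ?H)"
  proof
    fix x assume "x \<in> T"
    show "x \<in> convex_cone hull (T \<inter> ?H)"
    proof (cases "x = 0")
      case True
      then show ?thesis
        by (simp add: convex_cone_hull_contains_0)
    next
      case False
      then have "0 < w \<bullet> x"
        using pos \<open>x \<in> T\<close> by blast
      then have "(1 / (w \<bullet> x)) *\<^sub>R x \<in> T \<inter> ?H"
        using \<open>conic T\<close> \<open>x \<in> T\<close> by (simp add: conicD)
      then have "(w \<bullet> x) *\<^sub>R (1 / (w \<bullet> x)) *\<^sub>R x \<in> convex_cone hull (T \<inter> ?H)"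
        using \<open>0 < w \<bullet> x\<close> by (intro convex_cone_hull_mul hull_inc) auto
      then show ?thesis
        using \<open>0 < w \<bullet> x\<close> by simp
    qed
  qed
  then have "convex hull T \<subseteq> insert 0 (conic hull (convex hull (T \<inter> ?H)))"
    unfolding convex_cone_hull_separate[symmetric]
    by (simp add: hull_minimal convex_convex_cone_hull)
  then show "convex hull T \<inter> ?H \<subseteq> convex hull (T \<inter> ?H)"
    using slice_in_H by (force simp: conic_hull_explicit)
qed

lemma extreme_point_of_subset:
  "x extreme_point_of S \<Longrightarrow> x \<in> T \<Longrightarrow> T \<subseteq> S \<Longrightarrow> x extreme_point_of T"
  by (auto simp: extreme_point_of_def)

lemma extreme_point_of_iff_face_between:
  assumes "F face_of S" "F \<subseteq> T" "T \<subseteq> S" "x \<in> F"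
  shows "x extreme_point_of T \<longleftrightarrow> x extreme_point_of S"
  using assms face_of_subset extreme_point_of_face by metis

lemma open_halfspaces_gt_compact:
  fixes A :: "'a::real_inner set"
  assumes "compact A"
  shows "open {x. \<forall>a\<in>A. 0 < a \<bullet> x}"
  unfolding open_contains_ball
proof (intro ballI)
  fix x assume x: "x \<in> {x. \<forall>a\<in>A. 0 < a \<bullet> x}"
  show "\<exists>e>0. ball x e \<subseteq> {x. \<forall>a\<in>A. 0 < a \<bullet> x}"
  proof (cases "A = {}")
    case True
    then show ?thesis
      by (auto intro: exI[of _ 1])
  next
    case False
    have "continuous_on A (\<lambda>a. a \<bullet> x)"
      by (intro continuous_intros)
    then obtain a0 where a0: "a0 \<in> A" "\<And>a. a \<in> A \<Longrightarrow> a0 \<bullet> x \<le> a \<bullet> x"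
      using continuous_attains_inf[OF assms False] by blast
    obtain R where R: "0 < R" "\<And>a. a \<in> A \<Longrightarrow> norm a \<le> R"
      using compact_imp_bounded[OF assms] by (auto simp: bounded_pos)
    have "0 < a \<bullet> y" if "a \<in> A" "dist x y < a0 \<bullet> x / R" for a y
    proof -
      have "norm a * norm (x - y) \<le> R * dist x y"
        using R that(1) by (simp add: dist_norm mult_right_mono)
      also have "\<dots> < a0 \<bullet> x"
        using R that(2) by (simp add: field_simps)
      finally have "a \<bullet> (x - y) < a \<bullet> x"
        using a0(2)[OF that(1)] Cauchy_Schwarz_ineq2[of a "x - y"] by linarith
      then show ?thesis
        by (simp add: inner_diff_right)
    qed
    moreover have "0 < a0 \<bullet> x / R"
      using x a0(1) R(1) by simp
    ultimately show ?thesis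
      by (auto intro!: exI[of _ "a0 \<bullet> x / R"])
  qed
qed

lemma extreme_point_of_Int_open:
  fixes S :: "'a::real_normed_vector set"
  assumes S: "convex S" and "open U" "x \<in> U" and ext: "x extreme_point_of (S \<inter> U)"
  shows "x extreme_point_of S"
  unfolding extreme_point_of_def
proof (intro conjI ballI notI)
  show "x \<in> S"
    using ext by (simp add: extreme_point_of_def)
  fix a b assume a: "a \<in> S" and b: "b \<in> S" and "x \<in> open_segment a b"
  then obtain u where "a \<noteq> b" "0 < u" "u < 1" and x: "x = (1 - u) *\<^sub>R a + u *\<^sub>R b"
    by (auto simp: in_segment)
  obtain e where "0 < e" and e: "ball x e \<subseteq> U"
    using \<open>open U\<close> \<open>x \<in> U\<close> by (auto simp: open_contains_ball)
  \<comment> \<open>Shrink the segment towards x until it lies in the ball.\<close>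
  define N where "N = norm (a - x) + norm (b - x)"
  have "0 \<le> N"
    by (simp add: N_def)
  define t where "t = min 1 (e / (N + 1))"
  have t: "0 < t" "t \<le> 1"
    using \<open>0 < e\<close> \<open>0 \<le> N\<close> by (auto simp: t_def)
  have shrink: "x + t *\<^sub>R (c - x) \<in> S \<inter> U" if "c \<in> S" "norm (c - x) \<le> N" for c
  proof
    have "x + t *\<^sub>R (c - x) = (1 - t) *\<^sub>R x + t *\<^sub>R c"
      by (simp add: algebra_simps)
    then show "x + t *\<^sub>R (c - x) \<in> S"
      using convexD[OF S \<open>x \<in> S\<close> \<open>c \<in> S\<close>] t by simp
    have "t * norm (c - x) \<le> e / (N + 1) * N"
      using t that(2) \<open>0 < e\<close> \<open>0 \<le> N\<close> by (intro mult_mono) (auto simp: t_def)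
    also have "\<dots> < e"
      using \<open>0 < e\<close> \<open>0 \<le> N\<close> by (simp add: field_simps)
    finally show "x + t *\<^sub>R (c - x) \<in> U"
      using e t by (auto simp: dist_norm)
  qed
  have "(1 - u) *\<^sub>R (x + t *\<^sub>R (a - x)) + u *\<^sub>R (x + t *\<^sub>R (b - x))
      = x + t *\<^sub>R (((1 - u) *\<^sub>R a + u *\<^sub>R b) - x)"
    by (simp add: algebra_simps)
  also have "\<dots> = x"
    by (simp add: x[symmetric])
  moreover have "x + t *\<^sub>R (a - x) \<noteq> x + t *\<^sub>R (b - x)"
    using \<open>a \<noteq> b\<close> t by simp
  ultimately have "x \<in> open_segment (x + t *\<^sub>R (a - x)) (x + t *\<^sub>R (b - x))"
    using \<open>0 < u\<close> \<open>u < 1\<close> unfolding in_segment by metis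
  moreover have "x + t *\<^sub>R (a - x) \<in> S \<inter> U" "x + t *\<^sub>R (b - x) \<in> S \<inter> U"
    using shrink a b by (simp_all add: N_def)
  ultimately show False
    using ext unfolding extreme_point_of_def by blast
qed

lemma conic_eq_convex_hull_iff_extreme_points_of_slice:
  fixes K R :: "'a::euclidean_space set"
  assumes K: "convex K" "conic K" and R: "conic R" "0 \<in> R"
    and compact_slice: "compact (K \<inter> {x. w \<bullet> x = 1})"
    and pos: "\<And>x. x \<in> K \<Longrightarrow> x \<noteq> 0 \<Longrightarrow> 0 < w \<bullet> x"
  shows "K = convex hull (K \<inter> R) \<longleftrightarrow> (\<forall>x. x extreme_point_of (K \<inter> {x. w \<bullet> x = 1}) \<longrightarrow> x \<in> R)"
proof -
  let ?H = "{x. w \<bullet> x = 1}"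
  have KR: "conic (K \<inter> R)"
    using K(2) R(1) by (simp add: conic_def)
  show ?thesis
  proof
    assume K_eq: "K = convex hull (K \<inter> R)"
    have "K \<inter> ?H = convex hull (K \<inter> R \<inter> ?H)"
      using KR pos by (subst K_eq, subst convex_hull_Int_hyperplane_conic) auto
    then show "\<forall>x. x extreme_point_of (K \<inter> ?H) \<longrightarrow> x \<in> R"
      using extreme_point_of_convex_hull by fastforce
  next
    assume ext: "\<forall>x. x extreme_point_of (K \<inter> ?H) \<longrightarrow> x \<in> R"
    have "K \<subseteq> convex hull (K \<inter> R)"
    proof
      fix x assume "x \<in> K"
      show "x \<in> convex hull (K \<inter> R)"
      proof (cases "x = 0")
        case True
        then show ?thesis
          using \<open>x \<in> K\<close> R(2) by (simp add: hull_inc)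
      next
        case False
        then have "0 < w \<bullet> x"
          using pos \<open>x \<in> K\<close> by blast
        then have "(1 / (w \<bullet> x)) *\<^sub>R x \<in> K \<inter> ?H"
          using K(2) \<open>x \<in> K\<close> by (simp add: conicD)
        also have "K \<inter> ?H = convex hull {y. y extreme_point_of (K \<inter> ?H)}"
          using compact_slice K(1)
          by (simp add: Krein_Milman_Minkowski convex_Int convex_hyperplane)
        also have "\<dots> \<subseteq> convex hull (K \<inter> R)"
          using ext by (intro hull_mono) (auto simp: extreme_point_of_def)
        finally have "(w \<bullet> x) *\<^sub>R (1 / (w \<bullet> x)) *\<^sub>R x \<in> convex hull (K \<inter> R)"
          by (rule conicD[OF conic_convex_hull[OF KR]]) (use \<open>0 < w \<bullet> x\<close> in simp)
        then show ?thesis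
          using \<open>0 < w \<bullet> x\<close> by simp
      qed
    qed
    then show "K = convex hull (K \<inter> R)"
      using K(1) by (simp add: hull_minimal subset_antisym)
  qed
qed

section \<open>The positive semidefinite cone\<close>

lemma sym_mat_iff: "sym_mat A \<longleftrightarrow> (\<forall>i j. A$i$j = A$j$i)"
  by (auto simp: sym_mat_def transpose_def vec_eq_iff)

lemma frob_eq_inner_transpose: "frob M X = M \<bullet> transpose X"
  by (simp add: frob_def mtrace_def matrix_matrix_mult_def inner_vec_def transpose_def)

lemma frob_eq_inner: "sym_mat X \<Longrightarrow> frob M X = M \<bullet> X"
  by (simp add: frob_eq_inner_transpose sym_mat_def)

lemma mtrace_eq_inner: "mtrace X = mat 1 \<bullet> X"
  by (simp add: mtrace_def inner_vec_def mat_def mult_if_delta)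

lemma quadratic_form_eq_inner_outer: "x \<bullet> (X *v x) = outer x \<bullet> X"
  by (simp add: inner_vec_def matrix_vector_mult_def outer_def sum_distrib_left mult_ac)

lemma inner_outer: "outer x \<bullet> outer y = (x \<bullet> y)\<^sup>2"
  by (simp add: inner_vec_def outer_def power2_eq_square sum_distrib_left sum_distrib_right mult_ac)

lemma mtrace_outer: "mtrace (outer x) = x \<bullet> x"
  by (simp add: mtrace_def outer_def inner_vec_def)

lemma norm_outer: "norm (outer x) = x \<bullet> x"
  by (simp add: norm_eq_sqrt_inner inner_outer)

lemma outer_zero [simp]: "outer 0 = 0"
  by (simp add: outer_def vec_eq_iff)

lemma scaleR_outer: "0 \<le> c \<Longrightarrow> c *\<^sub>R outer x = outer (sqrt c *\<^sub>R x)"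
  by (simp add: outer_def vec_eq_iff)

lemma conic_range_outer: "conic (range outer)"
  by (auto simp: conic_def scaleR_outer)

lemma outer_in_psd_cone: "outer x \<in> psd_cone"
proof -
  have "y \<bullet> (outer x *v y) = (y \<bullet> x)\<^sup>2" for y
    by (simp add: quadratic_form_eq_inner_outer inner_outer)
  moreover have "sym_mat (outer x)"
    by (simp add: sym_mat_iff outer_def mult.commute)
  ultimately show ?thesis
    by (simp add: psd_cone_def)
qed

lemma quadratic_form_sym: "sym_mat X \<Longrightarrow> x \<bullet> (X *v y) = y \<bullet> (X *v x)"
  by (metis dot_lmul_matrix inner_commute sym_mat_def vector_transpose_matrix)

lemma matrix_vector_mult_axis_nth: "(X *v axis j t)$i = X$i$j * t"
  by (simp add: matrix_vector_mult_def axis_def if_distrib cong: if_cong)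

lemma quadratic_form_add_axis:
  assumes "sym_mat X"
  shows "(x + axis i t) \<bullet> (X *v (x + axis i t))
           = x \<bullet> (X *v x) + 2 * t * (X *v x)$i + t\<^sup>2 * X$i$i"
proof -
  have "x \<bullet> (X *v axis i t) = axis i t \<bullet> (X *v x)"
    by (rule quadratic_form_sym[OF assms])
  then have "x \<bullet> (X *v axis i t) = t * (X *v x)$i"
    by (simp add: inner_axis')
  then show ?thesis
    by (simp add: inner_axis' matrix_vector_mult_axis_nth power2_eq_square algebra_simps)
qed

lemma psd_cone_sym_mat: "X \<in> psd_cone \<Longrightarrow> sym_mat X"
  by (simp add: psd_cone_def)

lemma psd_cone_quadratic_form_nonneg: "X \<in> psd_cone \<Longrightarrow> 0 \<le> x \<bullet> (X *v x)"
  by (simp add: psd_cone_def)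

lemma psd_cone_diag_nonneg:
  assumes "X \<in> psd_cone"
  shows "0 \<le> X$i$i"
  using psd_cone_quadratic_form_nonneg[OF assms, of "axis i 1"]
  by (simp add: inner_axis' matrix_vector_mult_axis_nth)

lemma psd_cone_diag_zero_row:
  assumes X: "X \<in> psd_cone" and "X$i$i = 0"
  shows "X$i = 0"
proof (rule ccontr)
  assume "X$i \<noteq> 0"
  then obtain j where "X$i$j \<noteq> 0"
    by (auto simp: vec_eq_iff)
  define t where "t = - (X$j$j + 1) / (2 * X$i$j)"
  have "axis j 1 \<bullet> (X *v axis j 1) = X$j$j" "(X *v axis j 1)$i = X$i$j"
    by (simp_all add: inner_axis' matrix_vector_mult_axis_nth)
  then have "(axis j 1 + axis i t) \<bullet> (X *v (axis j 1 + axis i t)) = X$j$j + 2 * t * X$i$j"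
    using quadratic_form_add_axis[OF psd_cone_sym_mat[OF X]] \<open>X$i$i = 0\<close> by simp
  also have "\<dots> = -1"
    using \<open>X$i$j \<noteq> 0\<close> by (simp add: t_def field_simps)
  finally show False
    using psd_cone_quadratic_form_nonneg[OF X, of "axis j 1 + axis i t"] by simp
qed

lemma psd_cone_mtrace_pos:
  assumes X: "X \<in> psd_cone" and "X \<noteq> 0"
  shows "0 < mtrace X"
proof -
  obtain i where "X$i \<noteq> 0"
    using \<open>X \<noteq> 0\<close> by (auto simp: vec_eq_iff)
  then have "X$i$i \<noteq> 0"
    using psd_cone_diag_zero_row[OF X] by blast
  then have "0 < X$i$i"
    using psd_cone_diag_nonneg[OF X, of i] by linarith
  then show ?thesis
    unfolding mtrace_def by (rule sum_pos2[OF finite UNIV_I]) (simp add: psd_cone_diag_nonneg[OF X])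
qed

lemma psd_cone_minus_outer_pivot:
  assumes X: "X \<in> psd_cone" and d: "0 < X$i$i"
  defines "v \<equiv> (\<chi> k. X$k$i / sqrt (X$i$i))"
  shows "X - outer v \<in> psd_cone" and "(X - outer v)$i = 0"
    and "X$k = 0 \<Longrightarrow> (X - outer v)$k = 0"
proof -
  have sym: "X$k$l = X$l$k" for k l
    using psd_cone_sym_mat[OF X] by (simp add: sym_mat_iff)
  have "0 \<le> x \<bullet> ((X - outer v) *v x)" for x
  proof -
    define w where "w = (X *v x)$i"
    have "v \<bullet> x = w / sqrt (X$i$i)"
      by (simp add: v_def w_def inner_vec_def matrix_vector_mult_def sum_divide_distrib sym)
    then have "x \<bullet> ((X - outer v) *v x) = x \<bullet> (X *v x) - w\<^sup>2 / X$i$i"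
      using d by (simp add: quadratic_form_eq_inner_outer inner_outer inner_diff_right
          inner_commute power_divide)
    also have "\<dots> = x \<bullet> (X *v x) + 2 * (- w / X$i$i) * w + (- w / X$i$i)\<^sup>2 * X$i$i"
      using d by (simp add: field_simps power2_eq_square)
    also have "\<dots> = (x + axis i (- w / X$i$i)) \<bullet> (X *v (x + axis i (- w / X$i$i)))"
      by (simp add: quadratic_form_add_axis[OF psd_cone_sym_mat[OF X]] w_def)
    finally show ?thesis
      using psd_cone_quadratic_form_nonneg[OF X] by simp
  qed
  moreover have "sym_mat (X - outer v)"
    by (simp add: sym_mat_iff outer_def sym mult.commute)
  ultimately show "X - outer v \<in> psd_cone"
    by (simp add: psd_cone_def)
  have "(X - outer v)$i$l = 0" for l
  proof -
    have "X$i$i / sqrt (X$i$i) * (X$l$i / sqrt (X$i$i)) = X$i$l"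
      using d by (simp add: sym field_simps)
    then show ?thesis
      by (simp add: outer_def v_def)
  qed
  then show "(X - outer v)$i = 0"
    by (simp add: vec_eq_iff)
  show "X$k = 0 \<Longrightarrow> (X - outer v)$k = 0"
    by (simp add: vec_eq_iff outer_def v_def)
qed

lemma psd_cone_eq_Inter:
  "psd_cone = (\<Inter>i. \<Inter>j. {X. (axis i (axis j 1) - axis j (axis i 1)) \<bullet> X = 0})
     \<inter> (\<Inter>x. {X. outer x \<bullet> X \<ge> 0})"
  by (auto simp: psd_cone_def sym_mat_iff inner_diff_left inner_axis' quadratic_form_eq_inner_outer)

lemma closed_psd_cone: "closed psd_cone"
  unfolding psd_cone_eq_Inter
  by (intro closed_Int closed_INT ballI closed_hyperplane closed_halfspace_ge)

lemma convex_psd_cone: "convex psd_cone"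
  unfolding psd_cone_eq_Inter
  by (intro convex_Int convex_INT convex_hyperplane convex_halfspace_ge)

lemma psd_cone_subset_convex_hull_outer: "X \<in> psd_cone \<Longrightarrow> X \<in> convex hull (range outer)"
proof (induction "card {i. X$i \<noteq> 0}" arbitrary: X rule: less_induct)
  case less
  show ?case
  proof (cases "X = 0")
    case True
    then show ?thesis
      by (metis hull_inc outer_zero rangeI)
  next
    case False
    then obtain i where i: "X$i \<noteq> 0"
      by (auto simp: vec_eq_iff)
    then have "0 < X$i$i"
      using psd_cone_diag_zero_row[OF less.prems] psd_cone_diag_nonneg[OF less.prems, of i]
      by (metis order_le_neq_trans)
    define v where "v = (\<chi> k. X$k$i / sqrt (X$i$i))"
    note pivot = psd_cone_minus_outer_pivot[OF less.prems \<open>0 < X$i$i\<close>, folded v_def]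
    have "{k. (X - outer v)$k \<noteq> 0} \<subset> {k. X$k \<noteq> 0}"
      using pivot(2,3) i by auto
    then have "card {k. (X - outer v)$k \<noteq> 0} < card {k. X$k \<noteq> 0}"
      by (simp add: psubset_card_mono)
    then have "X - outer v \<in> convex hull (range outer)"
      using less.hyps pivot(1) by blast
    moreover have "convex_cone (convex hull (range outer))"
      by (simp add: convex_cone_def conic_convex_hull conic_range_outer)
    ultimately have "(X - outer v) + outer v \<in> convex hull (range outer)"
      by (metis convex_cone_add hull_inc rangeI)
    then show ?thesis
      by simp
  qed
qed

lemma psd_cone_eq_convex_hull_outer: "psd_cone = convex hull (range outer)"
  using psd_cone_subset_convex_hull_outer outer_in_psd_cone
  by (metis convex_psd_cone hull_minimal image_subset_iff subsetI subset_antisym)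

section \<open>Rank-one generated spectrahedral cones\<close>

lemma SM_eq_Int_halfspaces: "SM A = psd_cone \<inter> (\<Inter>M\<in>A. {X. 0 \<le> M \<bullet> X})"
  by (auto simp: SM_def frob_eq_inner psd_cone_sym_mat)

lemma SM_antimono: "A \<subseteq> B \<Longrightarrow> SM B \<subseteq> SM A"
  by (auto simp: SM_def)

lemma conic_SM: "conic (SM A)"
proof -
  have "conic psd_cone"
    by (simp add: psd_cone_eq_convex_hull_outer conic_convex_hull conic_range_outer)
  then show ?thesis
    by (auto simp: conic_def SM_eq_Int_halfspaces)
qed

lemma convex_SM_unit_trace: "convex (SM A \<inter> {X. mtrace X = 1})"
  unfolding SM_eq_Int_halfspaces mtrace_eq_inner
  by (intro convex_Int convex_INT convex_psd_cone convex_halfspace_ge convex_hyperplane)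

lemma psd_cone_unit_trace_eq_convex_hull:
  "psd_cone \<inter> {X. mtrace X = 1} = convex hull (range outer \<inter> {X. mtrace X = 1})"
  unfolding mtrace_eq_inner psd_cone_eq_convex_hull_outer
  by (rule convex_hull_Int_hyperplane_conic[OF conic_range_outer])
    (use outer_in_psd_cone psd_cone_mtrace_pos in \<open>auto simp: mtrace_eq_inner\<close>)

lemma compact_SM_unit_trace: "compact (SM A \<inter> {X. mtrace X = 1})"
proof -
  have "range outer \<inter> {X. mtrace X = 1} \<subseteq> cball 0 1"
    by (auto simp: norm_outer mtrace_outer)
  then have "bounded (psd_cone \<inter> {X. mtrace X = 1})"
    unfolding psd_cone_unit_trace_eq_convex_hull
    by (rule bounded_convex_hull[OF bounded_subset[OF bounded_cball]])
  then have "bounded (SM A \<inter> {X. mtrace X = 1})"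
    by (rule bounded_subset) (auto simp: SM_def)
  moreover have "closed (SM A \<inter> {X. mtrace X = 1})"
    unfolding SM_eq_Int_halfspaces mtrace_eq_inner
    by (intro closed_Int closed_INT ballI closed_psd_cone closed_halfspace_ge closed_hyperplane)
  ultimately show ?thesis
    by (simp add: compact_eq_bounded_closed)
qed

lemma ROG_SM_iff_extreme_points:
  "ROG (SM A) \<longleftrightarrow> (\<forall>X. X extreme_point_of (SM A \<inter> {X. mtrace X = 1}) \<longrightarrow> X \<in> range outer)"
  unfolding ROG_def mtrace_eq_inner
proof (rule conic_eq_convex_hull_iff_extreme_points_of_slice)
  show "convex (SM A)"
    unfolding SM_eq_Int_halfspaces
    by (intro convex_Int convex_INT convex_psd_cone convex_halfspace_ge)
  show "0 \<in> range outer"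
    by (metis outer_zero rangeI)
  show "compact (SM A \<inter> {X. mat 1 \<bullet> X = 1})"
    using compact_SM_unit_trace by (simp add: mtrace_eq_inner)
  show "0 < mat 1 \<bullet> X" if "X \<in> SM A" "X \<noteq> 0" for X
    using that psd_cone_mtrace_pos[of X] unfolding SM_def mtrace_eq_inner by blast
qed (rule conic_SM conic_range_outer)+

lemma extreme_point_of_SM_in_range_outer_if_inactive:
  assumes X: "X extreme_point_of (SM A \<inter> {X. mtrace X = 1})" and "compact A"
    and inactive: "\<forall>M\<in>A. frob M X \<noteq> 0"
  shows "X \<in> range outer"
proof -
  let ?U = "{Y. \<forall>M\<in>A. 0 < M \<bullet> Y}"
  have XS: "X \<in> SM A \<inter> {X. mtrace X = 1}"
    using X by (simp add: extreme_point_of_def)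
  then have "X \<in> ?U"
    using inactive by (force simp: SM_def frob_eq_inner psd_cone_sym_mat)
  moreover have "psd_cone \<inter> {X. mtrace X = 1} \<inter> ?U \<subseteq> SM A \<inter> {X. mtrace X = 1}"
    by (auto simp: SM_eq_Int_halfspaces less_imp_le)
  ultimately have "X extreme_point_of (psd_cone \<inter> {X. mtrace X = 1} \<inter> ?U)"
    using XS by (intro extreme_point_of_subset[OF X]) (auto simp: SM_def)
  moreover have "convex (psd_cone \<inter> {X. mtrace X = 1})"
    by (simp add: psd_cone_unit_trace_eq_convex_hull)
  ultimately have "X extreme_point_of (psd_cone \<inter> {X. mtrace X = 1})"
    using extreme_point_of_Int_open open_halfspaces_gt_compact[OF \<open>compact A\<close>] \<open>X \<in> ?U\<close>
    by blast
  then show ?thesis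
    unfolding psd_cone_unit_trace_eq_convex_hull by (auto dest: extreme_point_of_convex_hull)
qed

lemma extreme_point_of_SM_unit_trace_iff_active:
  assumes "A \<subseteq> B" "M0 \<in> A" "X \<in> SM A \<inter> {X. mtrace X = 1}" "frob M0 X = 0"
    and face: "\<And>Y. Y \<in> SM A \<inter> {X. mtrace X = 1} \<Longrightarrow> frob M0 Y = 0 \<Longrightarrow> Y \<in> SM B"
  shows "X extreme_point_of (SM B \<inter> {X. mtrace X = 1})
           \<longleftrightarrow> X extreme_point_of (SM A \<inter> {X. mtrace X = 1})"
proof (rule extreme_point_of_iff_face_between)
  have frob_inner: "frob M0 Y = M0 \<bullet> Y" if "Y \<in> SM A" for Y
    using that by (simp add: SM_def frob_eq_inner psd_cone_sym_mat)
  let ?F = "SM A \<inter> {X. mtrace X = 1} \<inter> {Y. M0 \<bullet> Y = 0}"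
  show "?F face_of (SM A \<inter> {X. mtrace X = 1})"
    using \<open>M0 \<in> A\<close> by (intro face_of_Int_supporting_hyperplane_ge convex_SM_unit_trace)
      (auto simp: SM_eq_Int_halfspaces)
  show "?F \<subseteq> SM B \<inter> {X. mtrace X = 1}"
    using face frob_inner by fastforce
  show "SM B \<inter> {X. mtrace X = 1} \<subseteq> SM A \<inter> {X. mtrace X = 1}"
    using SM_antimono[OF \<open>A \<subseteq> B\<close>] by auto
  show "X \<in> ?F"
    using assms(3,4) frob_inner by auto
qed

lemma ROG_SM_if_ROG_SM_superset:
  assumes "A \<subseteq> B" "compact A" and ROG_B: "ROG (SM B)"
    and lift: "\<And>M0 Y. M0 \<in> A \<Longrightarrow> Y \<in> SM A \<inter> {X. mtrace X = 1} \<Longrightarrow> frob M0 Y = 0 \<Longrightarrow> Y \<in> SM B"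
  shows "ROG (SM A)"
  unfolding ROG_SM_iff_extreme_points
proof (intro allI impI)
  fix X assume X: "X extreme_point_of (SM A \<inter> {X. mtrace X = 1})"
  show "X \<in> range outer"
  proof (cases "\<exists>M0\<in>A. frob M0 X = 0")
    case True
    then obtain M0 where "M0 \<in> A" "frob M0 X = 0"
      by blast
    moreover have "X \<in> SM A \<inter> {X. mtrace X = 1}"
      using X by (simp add: extreme_point_of_def)
    ultimately have "X extreme_point_of (SM B \<inter> {X. mtrace X = 1})"
      using extreme_point_of_SM_unit_trace_iff_active[OF \<open>A \<subseteq> B\<close>] lift X by blast
    then show ?thesis
      using ROG_B by (simp add: ROG_SM_iff_extreme_points)
  next
    case False
    then show ?thesis
      using extreme_point_of_SM_in_range_outer_if_inactive[OF X \<open>compact A\<close>] by blast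
  qed
qed

lemma ROG_SM_Union:
  assumes "finite I" and compact: "\<And>i. i \<in> I \<Longrightarrow> compact (Ms i)"
    and ROG: "\<And>i. i \<in> I \<Longrightarrow> ROG (SM (Ms i))"
    and lift: "\<And>i M0 Y. i \<in> I \<Longrightarrow> M0 \<in> Ms i \<Longrightarrow> Y \<in> SM (Ms i) \<inter> {X. mtrace X = 1} \<Longrightarrow>
                 frob M0 Y = 0 \<Longrightarrow> Y \<in> SM (\<Union>(Ms ` I))"
  shows "ROG (SM (\<Union>(Ms ` I)))"
  unfolding ROG_SM_iff_extreme_points
proof (intro allI impI)
  fix X assume X: "X extreme_point_of (SM (\<Union>(Ms ` I)) \<inter> {X. mtrace X = 1})"
  show "X \<in> range outer"
  proof (cases "\<exists>i\<in>I. \<exists>M0\<in>Ms i. frob M0 X = 0")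
    case True
    then obtain i M0 where i: "i \<in> I" and "M0 \<in> Ms i" "frob M0 X = 0"
      by blast
    moreover have "X \<in> SM (Ms i) \<inter> {X. mtrace X = 1}"
      using X SM_antimono[of "Ms i" "\<Union>(Ms ` I)"] i by (auto simp: extreme_point_of_def)
    ultimately have "X extreme_point_of (SM (Ms i) \<inter> {X. mtrace X = 1})"
      using extreme_point_of_SM_unit_trace_iff_active[of "Ms i" "\<Union>(Ms ` I)"] lift[OF i] X
      by blast
    then show ?thesis
      using ROG[OF i] by (simp add: ROG_SM_iff_extreme_points)
  next
    case False
    have "compact (\<Union>(Ms ` I))"
      using \<open>finite I\<close> compact by (intro compact_UN) auto
    with False show ?thesis
      using extreme_point_of_SM_in_range_outer_if_inactive[OF X] by blast
  qed
qed

theorem lemma2p20: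
  fixes Ms :: "nat \<Rightarrow> (real^'n^'n) set" and k :: nat
  assumes sym: "\<And>i. i \<in> {1..k} \<Longrightarrow> Ms i \<subseteq> symmats"
    and cpt: "\<And>i. i \<in> {1..k} \<Longrightarrow> compact (Ms i)"
    and sep: "\<And>X i Mi. X \<in> psd_cone \<Longrightarrow> X \<noteq> 0 \<Longrightarrow> i \<in> {1..k} \<Longrightarrow>
               Mi \<in> Ms i \<Longrightarrow> frob Mi X = 0 \<Longrightarrow>
               (\<forall>M \<in> (\<Union>j\<in>{1..k}. Ms j) - Ms i. frob M X > 0)"
  shows "ROG (SM (\<Union>j\<in>{1..k}. Ms j)) \<longleftrightarrow> (\<forall>i\<in>{1..k}. ROG (SM (Ms i)))"
proof -
  have lift: "Y \<in> SM (\<Union>j\<in>{1..k}. Ms j)"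
    if i: "i \<in> {1..k}" and M0: "M0 \<in> Ms i"
      and Y: "Y \<in> SM (Ms i) \<inter> {X. mtrace X = 1}" "frob M0 Y = 0" for i M0 Y
  proof -
    have "Y \<in> psd_cone" "Y \<noteq> 0"
      using Y by (auto simp: SM_def mtrace_def)
    then have "0 < frob M Y" if "M \<in> (\<Union>j\<in>{1..k}. Ms j) - Ms i" for M
      using sep[OF _ _ i M0 Y(2)] that by blast
    then show ?thesis
      using Y(1) by (fastforce simp: SM_def less_imp_le)
  qed
  show ?thesis
  proof
    assume "ROG (SM (\<Union>j\<in>{1..k}. Ms j))"
    then show "\<forall>i\<in>{1..k}. ROG (SM (Ms i))"
      using ROG_SM_if_ROG_SM_superset cpt lift by (metis UN_upper)
  next
    assume "\<forall>i\<in>{1..k}. ROG (SM (Ms i))"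
    then show "ROG (SM (\<Union>j\<in>{1..k}. Ms j))"
      using ROG_SM_Union[of "{1..k}" Ms] cpt lift by blast
  qed
qed

end
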